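(* Let $r,k,s$ be integers with $k+r\neq0$, $k+s\neq0$, and let $n\ge0$ be an integer. Then \[ 5F_{k+r}F_{k+s}\;\Big|\;L_{2k+r+s}^{n+1}-(-1)^{(k+s)(n+1)}L_{r-s}^{n+1}. \] In particular, $5F_{k+r}^2\mid L_{2(k+r)}^{n+1}-(-1)^{(k+r)(n+1)}2^{n+1}$.
   Context: $F_n$ and $L_n$ denote the Fibonacci and Lucas numbers, defined for all integers $n$ by $F_0=0,F_1=1$, $L_0=2,L_1=1$ and $x_n=x_{n-1}+x_{n-2}$, with $F_{-n}=(-1)^{n-1}F_n$ and $L_{-n}=(-1)^nL_n$. *)

theory Defs
  imports Main
begin

fun fibn :: "nat \<Rightarrow> int" where
  "fibn 0 = 0" | "fibn (Suc 0) = 1" | "fibn (Suc (Suc n)) = fibn (Suc n) + fibn n"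

fun lucn :: "nat \<Rightarrow> int" where
  "lucn 0 = 2" | "lucn (Suc 0) = 1" | "lucn (Suc (Suc n)) = lucn (Suc n) + lucn n"

definition F :: "int \<Rightarrow> int" where
  "F m = (if m \<ge> 0 then fibn (nat m) else (-1) ^ (nat (-m) + 1) * fibn (nat (-m)))"

definition L :: "int \<Rightarrow> int" where
  "L m = (if m \<ge> 0 then lucn (nat m) else (-1) ^ nat (-m) * lucn (nat (-m)))"

definition negpow :: "int \<Rightarrow> int" where
  "negpow e = (if even e then 1 else -1)"

end

theory Submission
  imports Defs Complex_Main
begin

text \<open>
  With \<open>\<phi>, \<psi> = (1 \<plusminus> \<surd>5)/2\<close> and \<open>\<phi>\<psi> = -1\<close>, Binet's formulas give
  \<open>L(a+b) - (-1)^b L(a-b) = (\<phi>^a - \<psi>^a)(\<phi>^b - \<psi>^b) = 5 F(a) F(b)\<close>.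
  So \<open>5 F(a) F(b)\<close> divides \<open>X - Y\<close> for \<open>X = L(a+b)\<close>, \<open>Y = (-1)^b L(a-b)\<close>,
  hence also \<open>X^m - Y^m\<close>. Take \<open>a = k + r\<close>, \<open>b = k + s\<close>; the special case is \<open>r = s\<close>,
  where \<open>L(0) = 2\<close>.
\<close>

definition phi :: real where "phi = (1 + sqrt 5) / 2"
definition psi :: real where "psi = (1 - sqrt 5) / 2"

lemma phi_square: "phi\<^sup>2 = phi + 1"
  by (simp add: phi_def power2_eq_square field_simps)

lemma psi_square: "psi\<^sup>2 = psi + 1"
  by (simp add: psi_def power2_eq_square field_simps)

lemma phi_times_psi: "phi * psi = -1"
  by (simp add: phi_def psi_def field_simps)

lemma phi_minus_psi: "phi - psi = sqrt 5"
  by (simp add: phi_def psi_def field_simps)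

lemma phi_nonzero: "phi \<noteq> 0" and psi_nonzero: "psi \<noteq> 0"
  using phi_times_psi by auto

lemma power_int_minus_of_nat_eq:
  fixes x y :: "'a::field"
  assumes "x * y = -1"
  shows "x powi (- int j) = (- y) ^ j"
proof -
  have "inverse x = - y"
    using assms by (simp add: inverse_unique minus_mult_right[symmetric])
  then show ?thesis
    by (simp add: power_int_minus power_inverse[symmetric])
qed

lemma power_Suc_Suc_golden:
  fixes x :: "'a::comm_ring_1"
  assumes "x\<^sup>2 = x + 1"
  shows "x ^ Suc (Suc n) = x ^ Suc n + x ^ n"
proof -
  have "x ^ Suc (Suc n) = x\<^sup>2 * x ^ n"
    by (simp add: power2_eq_square)
  then show ?thesis
    by (simp add: assms algebra_simps)
qed

lemma fibn_binet: "fibn n * sqrt 5 = phi ^ n - psi ^ n"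
proof (induction n rule: fibn.induct)
  case (3 n)
  then show ?case
    unfolding power_Suc_Suc_golden[OF phi_square] power_Suc_Suc_golden[OF psi_square]
    by (simp add: algebra_simps)
qed (simp_all add: phi_minus_psi)

lemma lucn_binet: "lucn n = phi ^ n + psi ^ n"
proof (induction n rule: lucn.induct)
  case (3 n)
  then show ?case
    unfolding power_Suc_Suc_golden[OF phi_square] power_Suc_Suc_golden[OF psi_square]
    by simp
qed (simp_all add: phi_def psi_def field_simps)

lemma F_binet: "F m * sqrt 5 = phi powi m - psi powi m"
proof (cases "m \<ge> 0")
  case True
  then obtain j where "m = int j"
    using nonneg_eq_int by blast
  then show ?thesis
    by (simp add: F_def fibn_binet)
next
  case False
  define j where "j = nat (- m)"
  have m: "m = - int j" "j > 0"
    using False by (simp_all add: j_def)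
  have "phi powi m - psi powi m = (- psi) ^ j - (- phi) ^ j"
    using m phi_times_psi
    by (simp add: power_int_minus_of_nat_eq mult.commute[of psi])
  also have "\<dots> = (-1) ^ Suc j * (phi ^ j - psi ^ j)"
    by (simp add: power_minus[of psi] power_minus[of phi] algebra_simps)
  finally show ?thesis
    using m False by (simp add: F_def fibn_binet)
qed

lemma L_binet: "L m = phi powi m + psi powi m"
proof (cases "m \<ge> 0")
  case True
  then obtain j where "m = int j"
    using nonneg_eq_int by blast
  then show ?thesis
    by (simp add: L_def lucn_binet)
next
  case False
  define j where "j = nat (- m)"
  have m: "m = - int j" "j > 0"
    using False by (simp_all add: j_def)
  have "phi powi m + psi powi m = (- psi) ^ j + (- phi) ^ j"
    using m phi_times_psi
    by (simp add: power_int_minus_of_nat_eq mult.commute[of psi])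
  also have "\<dots> = (-1) ^ j * (phi ^ j + psi ^ j)"
    by (simp add: power_minus[of psi] power_minus[of phi] algebra_simps)
  finally show ?thesis
    using m False by (simp add: L_def lucn_binet)
qed

lemma negpow_eq_power_int: "negpow b = (-1::real) powi b"
  by (cases "even b") (auto simp: negpow_def)

lemma negpow_mult_of_nat: "negpow (b * int m) = negpow b ^ m"
  by (cases "even b") (auto simp: negpow_def even_mult_iff)

lemma L_add_minus_L_diff: "L (a + b) - negpow b * L (a - b) = 5 * F a * F b"
proof -
  have "real_of_int (L (a + b) - negpow b * L (a - b))
      = phi powi (a + b) + psi powi (a + b)
        - (phi * psi) powi b * (phi powi (a - b) + psi powi (a - b))"
    by (simp add: L_binet negpow_eq_power_int phi_times_psi)
  also have "\<dots> = (phi powi a - psi powi a) * (phi powi b - psi powi b)"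
    using phi_nonzero psi_nonzero
    by (simp add: power_int_mult_distrib power_int_add power_int_diff field_simps)
  also have "\<dots> = (F a * sqrt 5) * (F b * sqrt 5)"
    by (simp add: F_binet)
  also have "\<dots> = real_of_int (5 * F a * F b)"
    by (simp add: algebra_simps)
  finally show ?thesis
    by linarith
qed

lemma F_mult_dvd_L_power_diff:
  "5 * F a * F b dvd L (a + b) ^ m - negpow (b * int m) * L (a - b) ^ m"
proof -
  let ?X = "L (a + b)" and ?Y = "negpow b * L (a - b)"
  have "?X - ?Y dvd ?X ^ m - ?Y ^ m"
    by (metis power_diff_sumr2 dvd_triv_left)
  then show ?thesis
    by (simp add: L_add_minus_L_diff negpow_mult_of_nat power_mult_distrib)
qed

text \<open>The divisibility holds for all indices.\<close>

theorem mainTheorem12: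
  fixes r k s :: int and n :: nat
  assumes "k + r \<noteq> 0" and "k + s \<noteq> 0"
  shows "5 * F (k + r) * F (k + s) dvd
           L (2 * k + r + s) ^ (n + 1) - negpow ((k + s) * int (n + 1)) * L (r - s) ^ (n + 1)
       \<and> 5 * F (k + r) ^ 2 dvd
           L (2 * (k + r)) ^ (n + 1) - negpow ((k + r) * int (n + 1)) * 2 ^ (n + 1)"
proof
  show "5 * F (k + r) * F (k + s) dvd
           L (2 * k + r + s) ^ (n + 1) - negpow ((k + s) * int (n + 1)) * L (r - s) ^ (n + 1)"
    using F_mult_dvd_L_power_diff[of "k + r" "k + s" "n + 1"] by (simp add: algebra_simps)
  have "L 0 = 2"
    by (simp add: L_def)
  then show "5 * F (k + r) ^ 2 dvd
           L (2 * (k + r)) ^ (n + 1) - negpow ((k + r) * int (n + 1)) * 2 ^ (n + 1)"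
    using F_mult_dvd_L_power_diff[of "k + r" "k + r" "n + 1"]
    by (simp add: algebra_simps power2_eq_square)
qed

end
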